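(* Let $\beta_1\in(0,1)$, $\beta_0=1-\beta_1$, $\rho\in(0,1)$, $\theta\in(0,1)$, $\lambda\ge 0$ and $N_0>0$. For $s\in[0,1]$ define $$\bar m_2(s)=\frac{\beta_0\rho}{\rho+\beta_1 s(1-\rho)},\qquad \bar m_4(s)=\frac{\beta_1\rho}{\rho+\beta_1 s(1-\rho)},$$ and $$E(s)=\frac{\theta N_0\, s}{1-\theta \bar m_4(s)}+\lambda\big(\bar m_2(s)+\bar m_4(s)\big).$$ If $$N_0\le \frac{\lambda(1-\rho)(1-\beta_1\theta)^2}{\rho\,\theta^2},$$ then $E$ is convex on $[0,1]$.
   Context: Mean-field model of a dense wireless network with two channel states (BAD with probability $\beta_0$, GOOD with probability $\beta_1$, i.i.d. over slots), packet arrival probability $\rho$ per slot, buffer size one, SINR decoding threshold $\theta<1$, noise power $N_0$, and weight $\lambda$ on queue length. The population is described by the fractions $m_1,m_2,m_3,m_4$ of users in states (BAD, empty queue), (BAD, one packet), (GOOD, empty queue), (GOOD, one packet). Only users in state (GOOD, one packet) may be scheduled; $s\in[0,1]$ is the fraction of them that transmit. For a constant control $s$, the equilibrium fractions of the fluid dynamics are $\bar m_1(s)=\frac{\beta_0\beta_1(1-\rho)s}{\rho+\beta_1 s(1-\rho)}$, $\bar m_2(s)$, $\bar m_3(s)=\frac{\beta_1^2(1-\rho)s}{\rho+\beta_1 s(1-\rho)}$, $\bar m_4(s)$ as given, and $E(s)$ is the resulting equilibrium (average) cost: power $\theta N_0 s/(1-\theta\bar m_4(s))$ plus $\lambda$ times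 the fraction of users with a packet. *)

theory Defs
  imports "HOL-Analysis.Analysis"
begin

definition m2bar :: "real \<Rightarrow> real \<Rightarrow> real \<Rightarrow> real" where
  "m2bar \<beta>1 \<rho> s = (1 - \<beta>1) * \<rho> / (\<rho> + \<beta>1 * s * (1 - \<rho>))"

definition m4bar :: "real \<Rightarrow> real \<Rightarrow> real \<Rightarrow> real" where
  "m4bar \<beta>1 \<rho> s = \<beta>1 * \<rho> / (\<rho> + \<beta>1 * s * (1 - \<rho>))"

definition Ecost :: "real \<Rightarrow> real \<Rightarrow> real \<Rightarrow> real \<Rightarrow> real \<Rightarrow> real \<Rightarrow> real" where
  "Ecost \<beta>1 \<rho> \<theta> lam N0 s =
     \<theta> * N0 * s / (1 - \<theta> * m4bar \<beta>1 \<rho> s) + lam * (m2bar \<beta>1 \<rho> s + m4bar \<beta>1 \<rho> s)"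

end

theory Submission
  imports Defs
begin

text \<open>With \<open>a = \<beta>\<^sub>1(1 - \<rho>)\<close> and \<open>c = \<rho>(1 - \<theta>\<beta>\<^sub>1)\<close> both equilibrium
  fractions share the denominator \<open>a s + \<rho>\<close>, and \<open>1 - \<theta> m\<^sub>4(s) = (a s + c)/(a s + \<rho>)\<close>.
  Hence \<open>E\<close> is an affine function minus \<open>P/(a s + c)\<close> plus \<open>Q/(a s + \<rho>)\<close>, whose second
  derivative is \<open>2 a\<^sup>2 (Q/(a s + \<rho>)\<^sup>3 - P/(a s + c)\<^sup>3)\<close>. Since \<open>c \<le> \<rho>\<close>, the ratio
  \<open>(a s + \<rho>)/(a s + c)\<close> is largest at \<open>s = 0\<close>, so nonnegativity on \<open>[0,1]\<close> reduces to
  \<open>P \<rho>\<^sup>3 \<le> Q c\<^sup>3\<close>, which is exactly the bound on \<open>N\<^sub>0\<close>.\<close>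

lemma convex_on_cong_on:
  assumes "convex_on S f" "\<And>x. x \<in> S \<Longrightarrow> f x = g x"
  shows "convex_on S g"
  using assms unfolding convex_on_def convex_def by (smt (verit))

lemma convex_on_affine_minus_plus_reciprocals:
  fixes a c r P Q \<alpha> \<beta> :: real
  assumes "convex I"
    and pos: "\<And>s. s \<in> I \<Longrightarrow> 0 < a * s + c \<and> 0 < a * s + r"
    and dominated: "\<And>s. s \<in> I \<Longrightarrow> P * (a * s + r)^3 \<le> Q * (a * s + c)^3"
  shows "convex_on I (\<lambda>s. \<alpha> * s + \<beta> - P / (a * s + c) + Q / (a * s + r))"
proof (rule f''_ge0_imp_convex[OF \<open>convex I\<close>])
  fix s assume s: "s \<in> I"
  have c: "a * s + c \<noteq> 0" and r: "a * s + r \<noteq> 0"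
    using pos[OF s] by auto
  show "DERIV (\<lambda>s. \<alpha> * s + \<beta> - P / (a * s + c) + Q / (a * s + r)) s
          :> \<alpha> + P * a / (a * s + c)^2 - Q * a / (a * s + r)^2"
    using c r by (auto intro!: derivative_eq_intros simp: power2_eq_square)
  show "DERIV (\<lambda>s. \<alpha> + P * a / (a * s + c)^2 - Q * a / (a * s + r)^2) s
          :> 2 * a^2 * (Q / (a * s + r)^3 - P / (a * s + c)^3)"
    by (rule derivative_eq_intros refl | simp add: c r)+
      (use c r in \<open>simp add: divide_simps eval_nat_numeral, simp add: algebra_simps\<close>)
  have "P / (a * s + c)^3 \<le> Q / (a * s + r)^3"
    using dominated[OF s] pos[OF s] by (simp add: divide_simps)
  then show "0 \<le> 2 * a^2 * (Q / (a * s + r)^3 - P / (a * s + c)^3)"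
    by simp
qed

lemma cube_domination_from_endpoint:
  fixes a c r s P Q :: real
  assumes "0 < c" "c \<le> r" "0 \<le> a" "0 \<le> s" "0 \<le> P"
    and endpoint: "P * r^3 \<le> Q * c^3"
  shows "P * (a * s + r)^3 \<le> Q * (a * s + c)^3"
proof -
  have ratio: "c * (a * s + r) \<le> r * (a * s + c)"
    using assms mult_right_mono[of c r "a * s"] by (simp add: algebra_simps)
  have "c^3 * (P * (a * s + r)^3) = P * (c * (a * s + r))^3"
    by (simp add: power_mult_distrib)
  also have "\<dots> \<le> P * (r * (a * s + c))^3"
    using ratio assms by (intro mult_left_mono power_mono) auto
  also have "\<dots> = (P * r^3) * (a * s + c)^3"
    by (simp add: power_mult_distrib)
  also have "\<dots> \<le> (Q * c^3) * (a * s + c)^3"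
    using endpoint assms by (intro mult_right_mono) auto
  finally show ?thesis
    using \<open>0 < c\<close> by (simp add: algebra_simps)
qed

lemma Ecost_eq_affine_minus_plus_reciprocals:
  fixes \<beta>1 \<rho> \<theta> lam N0 s :: real
  defines "a \<equiv> \<beta>1 * (1 - \<rho>)" and "c \<equiv> \<rho> * (1 - \<theta> * \<beta>1)"
  assumes a: "a \<noteq> 0" and c: "a * s + c \<noteq> 0" and \<rho>: "a * s + \<rho> \<noteq> 0"
  shows "Ecost \<beta>1 \<rho> \<theta> lam N0 s =
     \<theta> * N0 * s + \<theta> * N0 * (\<rho> - c) / a - \<theta> * N0 * (\<rho> - c) * c / a / (a * s + c)
       + lam * \<rho> / (a * s + \<rho>)"
proof -
  have denom: "\<rho> + \<beta>1 * s * (1 - \<rho>) = a * s + \<rho>"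
    by (simp add: a_def)
  have power_denom: "1 - \<theta> * m4bar \<beta>1 \<rho> s = (a * s + c) / (a * s + \<rho>)"
    using \<rho> by (simp add: m4bar_def denom field_simps a_def c_def)
  have occupancy: "m2bar \<beta>1 \<rho> s + m4bar \<beta>1 \<rho> s = \<rho> / (a * s + \<rho>)"
    unfolding m2bar_def m4bar_def denom add_divide_distrib[symmetric]
    by (simp add: algebra_simps)
  have "(\<rho> - c) / a - (\<rho> - c) * c / a / (a * s + c) = (\<rho> - c) * s / (a * s + c)"
    using a c by (simp add: divide_simps) (simp add: algebra_simps)
  then have power_term: "s / ((a * s + c) / (a * s + \<rho>))
      = s + (\<rho> - c) / a - (\<rho> - c) * c / a / (a * s + c)"
    using c by (simp add: field_simps)
  have "Ecost \<beta>1 \<rho> \<theta> lam N0 s = \<theta> * N0 * (s / ((a * s + c) / (a * s + \<rho>)))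
      + lam * \<rho> / (a * s + \<rho>)"
    unfolding Ecost_def power_denom occupancy by simp
  then show ?thesis
    unfolding power_term by (simp add: algebra_simps)
qed

lemma N0_bound_imp_endpoint_domination:
  fixes \<beta>1 \<rho> \<theta> lam N0 :: real
  defines "a \<equiv> \<beta>1 * (1 - \<rho>)" and "c \<equiv> \<rho> * (1 - \<theta> * \<beta>1)"
  assumes "0 < \<beta>1" "0 < \<rho>" "\<rho> < 1" "0 < \<theta>" "0 \<le> c"
    and "N0 \<le> lam * (1 - \<rho>) * (1 - \<beta>1 * \<theta>)^2 / (\<rho> * \<theta>^2)"
  shows "\<theta> * N0 * (\<rho> - c) * c / a * \<rho>^3 \<le> lam * \<rho> * c^3"
proof -
  have "\<theta> * N0 * (\<rho> - c) * c / a * \<rho>^3 = N0 * (\<rho> * \<theta>^2) * (\<rho>^3 * c / (1 - \<rho>))"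
    using assms by (simp add: a_def c_def field_simps power2_eq_square power3_eq_cube)
  also have "\<dots> \<le> lam * (1 - \<rho>) * (1 - \<beta>1 * \<theta>)^2 * (\<rho>^3 * c / (1 - \<rho>))"
    using assms by (intro mult_right_mono) (simp_all add: pos_le_divide_eq)
  also have "\<dots> = lam * \<rho> * c^3"
    using assms by (simp add: c_def field_simps power2_eq_square power3_eq_cube)
  finally show ?thesis .
qed

theorem proposition3:
  fixes \<beta>1 \<rho> \<theta> lam N0 :: real
  assumes "0 < \<beta>1" "\<beta>1 < 1"
    and "0 < \<rho>" "\<rho> < 1"
    and "0 < \<theta>" "\<theta> < 1"
    and "0 \<le> lam"
    and "0 < N0"
    and "N0 \<le> lam * (1 - \<rho>) * (1 - \<beta>1 * \<theta>)^2 / (\<rho> * \<theta>^2)"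
  shows "convex_on {0..1} (Ecost \<beta>1 \<rho> \<theta> lam N0)"
proof -
  define a where "a = \<beta>1 * (1 - \<rho>)"
  define c where "c = \<rho> * (1 - \<theta> * \<beta>1)"
  have "\<theta> * \<beta>1 < 1"
    using assms mult_strict_mono[of \<theta> 1 \<beta>1 1] by simp
  then have a: "0 < a" and c: "0 < c" "c \<le> \<rho>"
    using assms by (simp_all add: a_def c_def)
  have pos: "0 < a * s + c \<and> 0 < a * s + \<rho>" if "s \<in> {0..1}" for s
    using that a c by (auto intro: add_nonneg_pos)
  have endpoint: "\<theta> * N0 * (\<rho> - c) * c / a * \<rho>^3 \<le> lam * \<rho> * c^3"
    using assms c unfolding a_def c_def
    by (intro N0_bound_imp_endpoint_domination) auto
  have "convex_on {0..1} (\<lambda>s. \<theta> * N0 * s + \<theta> * N0 * (\<rho> - c) / a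
          - \<theta> * N0 * (\<rho> - c) * c / a / (a * s + c) + lam * \<rho> / (a * s + \<rho>))"
    (is "convex_on _ ?F")
    using assms a c pos endpoint
    by (intro convex_on_affine_minus_plus_reciprocals cube_domination_from_endpoint) auto
  then show ?thesis
  proof (rule convex_on_cong_on)
    fix s :: real assume "s \<in> {0..1}"
    with a pos[of s] show "?F s = Ecost \<beta>1 \<rho> \<theta> lam N0 s"
      unfolding a_def c_def by (intro Ecost_eq_affine_minus_plus_reciprocals[symmetric]) auto
  qed
qed

end
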